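(* Let $T$ be an HST with parameter $2$ and depth $h$, let $R$ be a set of requests issued at leaves of $T$, and consider a synchronous execution of the Arrow protocol on $T$ with request set $R$. Let $n(\ell)$ be the number of level-$\ell$ blocks of the corresponding hierarchical block partition. Then the total cost of the execution equals $\sum_{\ell=0}^{h-1}\big(n(\ell)-n(\ell+1)\big)\cdot\delta(\ell+1)$, where $\delta(\ell)=2^{\ell+1}-2$.
   Context: HST with parameter $2$, depth $h$: rooted tree, all leaves at the same depth, leaves on level $0$, root on level $h$, each edge from a level-$\ell$ node to a child has length $2^{\ell-1}$; two leaves whose lowest common ancestor is on level $\ell$ are at distance $\delta(\ell)=2^{\ell+1}-2$. A level-$\ell$ subtree is the subtree rooted at a level-$\ell$ node. Arrow protocol: each node $u$ has a pointer $\mathrm{link}(u)$ (itself or a neighbour), initially all pointing towards the node $v_0$ of a dummy request $r_0=(v_0,0)$, with $\mathrm{link}(v_0)=v_0$. A request $r=(v,t)$ issued at $v$ at time $t$: if $\mathrm{link}(v)=v$ it is queued behind the previous request at $v$; else atomically $\mathrm{find}(r)$ is sent to $\mathrm{link}(v)$ and $\mathrm{link}(v):=v$. A node $u$ receiving $\mathrm{find}(r)$ from $w$: if $\mathrm{link}(u)=u$, atomically $r$ is queued behind the last request issued at $u$ and $\mathrm{link}(u):=w$; else atomically forwards to $\mathrm{link}(u)$ and sets $\mathrm{link}(u):=w$. In a synchronous execution each message over an edge takes exactly the edge length. The resulting order is $r_0,r_1,\dots,r_{|R|-1}$ ($r_i=(v_i,t_i)$); the latency of $r_i$ ($i\ge1$)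 is the arrival time of $\mathrm{find}(r_i)$ at $v_{i-1}$ minus $t_i$, and the total cost is the sum of the latencies. Hierarchical block partition: for each level $\ell\in[0,h]$, the index set $\{0,\dots,|R|-1\}$ is partitioned into blocks $b^\ell_0,\dots,b^\ell_{n(\ell)-1}$, which are the maximal sets of consecutive indices (in the Arrow order) whose requests all lie in the same level-$\ell$ subtree of $T$, numbered in increasing order of indices. *)

theory Defs
  imports Complex_Main "HOL-Library.Sublist"
begin

text \<open>Nodes of the tree are encoded as paths from the root (lists of child indices).
  The root is [], the children of p are the nodes p @ [i].\<close>

type_synonym node = "nat list"

definition hst :: "node set \<Rightarrow> nat \<Rightarrow> bool" where
  "hst T h \<longleftrightarrow> finite T \<and> [] \<in> T \<and>
     (\<forall>p\<in>T. p \<noteq> [] \<longrightarrow> butlast p \<in> T) \<and>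
     (\<forall>p\<in>T. length p \<le> h) \<and>
     (\<forall>p\<in>T. length p < h \<longrightarrow> (\<exists>i. p @ [i] \<in> T))"

definition leaves :: "node set \<Rightarrow> nat \<Rightarrow> node set" where
  "leaves T h = {p \<in> T. length p = h}"

definition level :: "nat \<Rightarrow> node \<Rightarrow> nat" where
  "level h p = h - length p"

text \<open>Length of the edge between neighbours u and w: the edge from a level-l node to
  a child has length 2^(l-1).\<close>
definition elen :: "nat \<Rightarrow> node \<Rightarrow> node \<Rightarrow> real" where
  "elen h u w = 2 ^ (h - min (length u) (length w) - 1)"

definition delta :: "nat \<Rightarrow> real" where
  "delta l = 2 ^ (l + 1) - 2"

text \<open>Initial pointers: every node points to its neighbour towards v0; v0 points to itself.\<close>
definition link0 :: "node \<Rightarrow> node \<Rightarrow> node" where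
  "link0 v0 u = (if u = v0 then u
                 else if strict_prefix u v0 then take (length u + 1) v0
                 else butlast u)"

type_synonym req = "node \<times> real"   \<comment> \<open>(issuing leaf, issue time)\<close>
type_synonym msg = "req \<times> node \<times> node \<times> real"
  \<comment> \<open>find(r) sent from w to u, arriving at the given time\<close>

record state =
  lnk :: "node \<Rightarrow> node"
  lastreq :: "node \<Rightarrow> req"
  msgs :: "msg set"
  pred :: "req \<Rightarrow> req option"       \<comment> \<open>request r is queued behind pred r\<close>
  arrt :: "req \<Rightarrow> real"             \<comment> \<open>arrival time of find(r) at the node of pred r\<close>

datatype event = Issue req | Deliver msg

fun etime :: "event \<Rightarrow> real" where
  "etime (Issue r) = snd r"
| "etime (Deliver (r, w, u, a)) = a"

fun issues :: "event list \<Rightarrow> req list" where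
  "issues [] = []"
| "issues (Issue r # es) = r # issues es"
| "issues (Deliver m # es) = issues es"

definition init_state :: "node \<Rightarrow> state" where
  "init_state v0 = \<lparr> lnk = link0 v0, lastreq = (\<lambda>_. (v0, 0)), msgs = {},
                     pred = (\<lambda>_. None), arrt = (\<lambda>_. 0) \<rparr>"

text \<open>If link(v) = v it is
  queued locally behind the previous request at v (its latency is 0); otherwise
  find(r) is sent to link(v) and link(v) := v.\<close>
definition issue_step :: "nat \<Rightarrow> req \<Rightarrow> state \<Rightarrow> state" where
  "issue_step h r s = (let v = fst r; t = snd r in
     if lnk s v = v then
       s\<lparr> pred := (pred s)(r := Some (lastreq s v)), arrt := (arrt s)(r := t),
          lastreq := (lastreq s)(v := r) \<rparr>
     else
       s\<lparr> msgs := insert (r, v, lnk s v, t + elen h v (lnk s v)) (msgs s),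
          lnk := (lnk s)(v := v), lastreq := (lastreq s)(v := r) \<rparr>)"

definition deliver_step :: "nat \<Rightarrow> msg \<Rightarrow> state \<Rightarrow> state" where
  "deliver_step h m s = (case m of (r, w, u, a) \<Rightarrow>
     (let s1 = s\<lparr> msgs := msgs s - {m} \<rparr> in
      if lnk s u = u then
        s1\<lparr> pred := (pred s)(r := Some (lastreq s u)), arrt := (arrt s)(r := a),
            lnk := (lnk s)(u := w) \<rparr>
      else
        s1\<lparr> msgs := insert (r, u, lnk s u, a + elen h u (lnk s u)) (msgs s1),
            lnk := (lnk s)(u := w) \<rparr>))"

fun enabled :: "state \<Rightarrow> event \<Rightarrow> bool" where
  "enabled s (Issue r) = True"
| "enabled s (Deliver m) = (m \<in> msgs s)"

fun apply_event :: "nat \<Rightarrow> event \<Rightarrow> state \<Rightarrow> state" where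
  "apply_event h (Issue r) s = issue_step h r s"
| "apply_event h (Deliver m) s = deliver_step h m s"

text \<open>A complete synchronous execution: the atomic steps es (with intermediate states ss)
  occur in nondecreasing order of time (ties resolved arbitrarily), every request of R
  other than the dummy (v0,0) is issued exactly once at its issue time, every message is
  delivered exactly at its arrival time (send time + edge length), and at the end no
  message is in transit.\<close>
definition sync_exec :: "nat \<Rightarrow> node \<Rightarrow> req set \<Rightarrow> event list \<Rightarrow> state list \<Rightarrow> bool" where
  "sync_exec h v0 R es ss \<longleftrightarrow>
     length ss = Suc (length es) \<and> ss ! 0 = init_state v0 \<and>
     (\<forall>i < length es. enabled (ss ! i) (es ! i) \<and>
                      ss ! Suc i = apply_event h (es ! i) (ss ! i)) \<and>
     sorted (map etime es) \<and>
     distinct (issues es) \<and> set (issues es) = R - {(v0, 0)} \<and>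
     msgs (last ss) = {}"

definition arrow_order :: "state \<Rightarrow> req \<Rightarrow> req set \<Rightarrow> req list \<Rightarrow> bool" where
  "arrow_order s r0 R rs \<longleftrightarrow> distinct rs \<and> set rs = R \<and> rs \<noteq> [] \<and> rs ! 0 = r0 \<and>
     (\<forall>i. Suc i < length rs \<longrightarrow> pred s (rs ! Suc i) = Some (rs ! i))"

text \<open>Total cost: sum of latencies of all requests except the dummy.\<close>
definition total_cost :: "state \<Rightarrow> req \<Rightarrow> req set \<Rightarrow> real" where
  "total_cost s r0 R = (\<Sum>r \<in> R - {r0}. arrt s r - snd r)"

text \<open>Indices a..b form a run at level l if all requests rs!i, a <= i <= b, lie in one
  level-l subtree (rooted at a level-l node p, i.e. a node of length h - l).\<close>
definition same_subtree_run :: "nat \<Rightarrow> nat \<Rightarrow> req list \<Rightarrow> nat \<Rightarrow> nat \<Rightarrow> bool" where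
  "same_subtree_run h l rs a b \<longleftrightarrow> a \<le> b \<and> b < length rs \<and>
     (\<exists>p. length p = h - l \<and> (\<forall>i\<in>{a..b}. take (h - l) (fst (rs ! i)) = p))"

definition blocks :: "nat \<Rightarrow> nat \<Rightarrow> req list \<Rightarrow> nat set set" where
  "blocks h l rs = {{a..b} | a b. same_subtree_run h l rs a b \<and>
     (\<forall>a' b'. same_subtree_run h l rs a' b' \<and> {a..b} \<subseteq> {a'..b'} \<longrightarrow> {a'..b'} = {a..b})}"

definition nblocks :: "nat \<Rightarrow> nat \<Rightarrow> req list \<Rightarrow> nat" where
  "nblocks h l rs = card (blocks h l rs)"

end

theory Submission
  imports Defs
begin

text \<open>Every find message in transit moves away from the node of its request along
  tree edges, so a request's latency is exactly the tree distance from its node to the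
  node of its predecessor in the Arrow order.  This is an invariant of all reachable
  states.  For two leaves the distance is the sum of \<open>2^(l+1)\<close> over the
  levels \<open>l < h\<close> at which they lie in different level-\<open>l\<close> subtrees.  Summed over
  consecutive requests, level \<open>l\<close> contributes once per boundary between level-\<open>l\<close> blocks,
  i.e. \<open>n(l) - 1\<close> times, and summation by parts with \<open>\<delta>(l+1) - \<delta>(l) = 2^(l+1)\<close>
  gives the formula.\<close>

section \<open>Distances in the tree of paths\<close>

lemma prefix_longest_common_prefix_iff:
  "prefix ps (longest_common_prefix xs ys) \<longleftrightarrow> prefix ps xs \<and> prefix ps ys"
  by (meson longest_common_prefix_max_prefix longest_common_prefix_prefix1
      longest_common_prefix_prefix2 prefix_order.trans)

lemma longest_common_prefix_eqI:
  "(\<And>ps. prefix ps zs \<longleftrightarrow> prefix ps xs \<and> prefix ps ys) \<Longrightarrow> longest_common_prefix xs ys = zs"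
  by (metis prefix_order.antisym prefix_order.refl prefix_longest_common_prefix_iff)

lemma longest_common_prefix_prefix_right: "prefix u v \<Longrightarrow> longest_common_prefix v u = u"
  by (rule longest_common_prefix_eqI) (meson prefix_order.trans)

lemma longest_common_prefix_snoc_right:
  "\<not> prefix (u @ [c]) v \<Longrightarrow> longest_common_prefix v (u @ [c]) = longest_common_prefix v u"
  by (rule longest_common_prefix_eqI) (auto simp: prefix_longest_common_prefix_iff)

lemma take_eq_iff_le_length_longest_common_prefix:
  "m \<le> length xs \<Longrightarrow> m \<le> length ys \<Longrightarrow>
     take m xs = take m ys \<longleftrightarrow> m \<le> length (longest_common_prefix xs ys)"
proof (induction xs ys arbitrary: m rule: longest_common_prefix.induct)
  case (1 x xs y ys)
  then show ?case by (cases m) auto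
qed auto

definition root_dist :: "nat \<Rightarrow> nat \<Rightarrow> real" where
  "root_dist h k = (\<Sum>j<k. 2 ^ (h - j - 1))"

definition tree_dist :: "nat \<Rightarrow> node \<Rightarrow> node \<Rightarrow> real" where
  "tree_dist h v u = root_dist h (length v) + root_dist h (length u)
     - 2 * root_dist h (length (longest_common_prefix v u))"

definition adjacent :: "node \<Rightarrow> node \<Rightarrow> bool" where
  "adjacent x y \<longleftrightarrow> (\<exists>c. x = y @ [c]) \<or> (\<exists>c. y = x @ [c])"

definition away_from :: "node \<Rightarrow> node \<Rightarrow> node \<Rightarrow> bool" where
  "away_from v w u \<longleftrightarrow> (\<exists>c. w = u @ [c]) \<and> prefix w v \<or> (\<exists>c. u = w @ [c]) \<and> \<not> prefix u v"

lemma adjacent_sym: "adjacent x y \<longleftrightarrow> adjacent y x"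
  unfolding adjacent_def by auto

lemma adjacent_irrefl: "adjacent x y \<Longrightarrow> x \<noteq> y"
  unfolding adjacent_def by auto

lemma away_from_adjacent: "away_from v w u \<Longrightarrow> adjacent w u"
  unfolding away_from_def adjacent_def by auto

lemma away_from_self: "adjacent v y \<Longrightarrow> away_from v v y"
  unfolding adjacent_def away_from_def by (auto dest: prefix_length_le)

lemma away_from_continue:
  assumes "away_from v w u" and "adjacent u x" and "x \<noteq> w"
  shows "away_from v u x"
  using assms unfolding away_from_def adjacent_def
  by (auto dest: append_prefixD prefix_same_cases)

lemma root_dist_Suc: "root_dist h (Suc k) = root_dist h k + 2 ^ (h - k - 1)"
  by (simp add: root_dist_def)

lemma tree_dist_self: "tree_dist h v v = 0"
  unfolding tree_dist_def
  by (simp add: longest_common_prefix_prefix_right)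

lemma tree_dist_away_from:
  assumes "away_from v u x"
  shows "tree_dist h v x = tree_dist h v u + elen h u x"
  using assms unfolding away_from_def
proof
  assume "(\<exists>c. u = x @ [c]) \<and> prefix u v"
  then obtain c where u: "u = x @ [c]" and "prefix u v" by blast
  moreover from this have "prefix x v" by (auto dest: append_prefixD)
  ultimately show ?thesis
    by (simp add: tree_dist_def elen_def root_dist_Suc longest_common_prefix_prefix_right)
next
  assume "(\<exists>c. x = u @ [c]) \<and> \<not> prefix x v"
  then obtain c where "x = u @ [c]" and "\<not> prefix x v" by blast
  then show ?thesis
    by (simp add: tree_dist_def elen_def root_dist_Suc longest_common_prefix_snoc_right)
qed

lemma away_from_asym: "away_from v w u \<Longrightarrow> \<not> away_from v u w"
  using tree_dist_away_from[of v w u 0] tree_dist_away_from[of v u w 0]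
  by (auto simp: elen_def min.commute)

lemma root_dist_eq: "k \<le> h \<Longrightarrow> root_dist h k = 2 ^ h - 2 ^ (h - k)"
proof (induction k)
  case (Suc k)
  then have "(2::real) ^ (h - k) = 2 * 2 ^ (h - Suc k)"
    by (metis Suc_diff_Suc Suc_le_lessD power_Suc)
  with Suc show ?case by (simp add: root_dist_def)
qed (simp add: root_dist_def)

lemma sum_power2_Suc: "(\<Sum>l<m. (2::real) ^ (l + 1)) = 2 ^ (m + 1) - 2"
  by (induction m) auto

lemma tree_dist_leaves:
  assumes "length v = h" and "length v' = h"
  shows "tree_dist h v v' = (\<Sum>l<h. if take (h - l) v \<noteq> take (h - l) v' then 2 ^ (l + 1) else 0)"
proof -
  define k where "k = length (longest_common_prefix v v')"
  have "k \<le> h"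
    unfolding k_def using assms prefix_length_le longest_common_prefix_prefix1 by metis
  have differ: "take (h - l) v \<noteq> take (h - l) v' \<longleftrightarrow> l < h - k" if "l < h" for l
    using take_eq_iff_le_length_longest_common_prefix[of "h - l" v v'] that assms
    unfolding k_def by auto
  have "tree_dist h v v' = 2 ^ (h - k + 1) - 2"
    using assms \<open>k \<le> h\<close> by (simp add: tree_dist_def root_dist_eq k_def)
  also have "\<dots> = (\<Sum>l<h - k. 2 ^ (l + 1))"
    by (rule sum_power2_Suc[symmetric])
  also have "\<dots> = (\<Sum>l\<in>{l \<in> {..<h}. l < h - k}. 2 ^ (l + 1))"
    by (intro sum.cong) auto
  also have "\<dots> = (\<Sum>l<h. if l < h - k then 2 ^ (l + 1) else 0)"
    by (rule sum.inter_filter) simp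
  also have "\<dots> = (\<Sum>l<h. if take (h - l) v \<noteq> take (h - l) v' then 2 ^ (l + 1) else 0)"
    by (rule sum.cong) (simp_all add: differ)
  finally show ?thesis .
qed

section \<open>The latency invariant of the Arrow protocol\<close>

lemma link0_towards:
  assumes "x \<noteq> v0"
  shows "away_from v0 (link0 v0 x) x"
proof (cases "strict_prefix x v0")
  case True
  then have "take (length x + 1) v0 = x @ [v0 ! length x]"
    by (auto simp: prefix_length_less take_Suc_conv_app_nth strict_prefix_def prefix_def)
  moreover have "prefix (take (length x + 1) v0) v0"
    by (rule take_is_prefix)
  ultimately show ?thesis
    using True assms by (auto simp: link0_def away_from_def)
next
  case False
  with assms have "\<not> prefix x v0" and "x \<noteq> []" by (auto simp: strict_prefix_def)
  then show ?thesis
    using assms by (auto simp: link0_def away_from_def intro: append_butlast_last_id[symmetric])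
qed

definition pointers_ok :: "(node \<Rightarrow> node) \<Rightarrow> bool" where
  "pointers_ok L \<longleftrightarrow> (\<forall>x. L x \<noteq> x \<longrightarrow> adjacent x (L x) \<and> L (L x) \<noteq> x)"

lemma pointers_ok_link0: "pointers_ok (link0 v0)"
  unfolding pointers_ok_def
proof (intro allI impI conjI)
  fix x
  assume "link0 v0 x \<noteq> x"
  then have x: "x \<noteq> v0" by (auto simp: link0_def)
  then show "adjacent x (link0 v0 x)"
    using link0_towards adjacent_sym away_from_adjacent by blast
  show "link0 v0 (link0 v0 x) \<noteq> x"
  proof (cases "link0 v0 x = v0")
    case True
    then show ?thesis using x by (simp add: link0_def)
  next
    case False
    then show ?thesis
      using link0_towards[OF x] link0_towards[OF False] away_from_asym by metis
  qed
qed

lemma pointers_ok_sink: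
  "pointers_ok L \<Longrightarrow> pointers_ok (L(v := v))"
  unfolding pointers_ok_def by auto

lemma pointers_ok_redirect:
  assumes "pointers_ok L" and "adjacent u w" and "L w \<noteq> u"
  shows "pointers_ok (L(u := w))"
  unfolding pointers_ok_def
proof (intro allI impI)
  fix x
  assume moved: "(L(u := w)) x \<noteq> x"
  show "adjacent x ((L(u := w)) x) \<and> (L(u := w)) ((L(u := w)) x) \<noteq> x"
  proof (cases "x = u")
    case True
    with assms(2,3) show ?thesis
      using adjacent_irrefl by auto
  next
    case False
    with moved assms(1) have "adjacent x (L x)" and "L (L x) \<noteq> x"
      unfolding pointers_ok_def by auto
    moreover have "L x = u \<Longrightarrow> x \<noteq> w"
      using assms(3) by blast
    ultimately show ?thesis
      using False by auto
  qed
qed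

fun msg_edge :: "msg \<Rightarrow> node set" where
  "msg_edge (r, w, u, a) = {w, u}"

text \<open>\<open>(r, w, u, a)\<close> is find(r) on its way from w to u.  The two pointer conditions
  make u forward it further away from \<open>fst r\<close>, and keep the pointers free of 2-cycles
  when u is redirected to w.\<close>
fun find_msg_ok :: "nat \<Rightarrow> (node \<Rightarrow> node) \<Rightarrow> msg \<Rightarrow> bool" where
  "find_msg_ok h L (r, w, u, a) \<longleftrightarrow>
     L u \<noteq> w \<and> L w \<noteq> u \<and> away_from (fst r) w u \<and> a = snd r + tree_dist h (fst r) u"

lemma find_msg_ok_edge: "find_msg_ok h L m \<Longrightarrow> msg_edge m \<noteq> {x, L x}"
  by (cases m) (auto simp: doubleton_eq_iff)

lemma find_msg_ok_sink:
  assumes "find_msg_ok h L m"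
  shows "find_msg_ok h (L(v := v)) m"
proof -
  obtain r w u a where m: "m = (r, w, u, a)" by (cases m)
  with assms have "w \<noteq> u" by (auto dest: away_from_adjacent adjacent_irrefl)
  with assms show ?thesis by (auto simp: m)
qed

lemma find_msg_ok_redirect:
  "find_msg_ok h L m \<Longrightarrow> msg_edge m \<noteq> {w, u} \<Longrightarrow> find_msg_ok h (L(u := w)) m"
  by (cases m) auto

lemma find_msg_ok_issued:
  assumes "pointers_ok L" and "L (fst r) \<noteq> fst r"
  shows "find_msg_ok h (L(fst r := fst r))
           (r, fst r, L (fst r), snd r + elen h (fst r) (L (fst r)))"
proof -
  have "adjacent (fst r) (L (fst r))" and "L (L (fst r)) \<noteq> fst r"
    using assms unfolding pointers_ok_def by auto
  moreover have away: "away_from (fst r) (fst r) (L (fst r))"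
    using away_from_self \<open>adjacent (fst r) (L (fst r))\<close> .
  moreover have "tree_dist h (fst r) (L (fst r)) = elen h (fst r) (L (fst r))"
    using tree_dist_away_from[OF away] tree_dist_self by simp
  ultimately show ?thesis
    using assms(2) by simp
qed

lemma find_msg_ok_forwarded:
  assumes "pointers_ok L" and "find_msg_ok h L (r, w, u, a)" and "L u \<noteq> u"
  shows "find_msg_ok h (L(u := w)) (r, u, L u, a + elen h u (L u))"
proof -
  from assms(2) have "L u \<noteq> w" and "away_from (fst r) w u" and "a = snd r + tree_dist h (fst r) u"
    by simp_all
  moreover have "adjacent u (L u)" and "L (L u) \<noteq> u"
    using assms(1,3) unfolding pointers_ok_def by auto
  ultimately have "away_from (fst r) u (L u)"
    using away_from_continue by blast
  then have "a + elen h u (L u) = snd r + tree_dist h (fst r) (L u)"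
    using tree_dist_away_from \<open>a = snd r + tree_dist h (fst r) u\<close> by simp
  with \<open>away_from (fst r) u (L u)\<close> \<open>L u \<noteq> w\<close> \<open>L (L u) \<noteq> u\<close> assms(3) show ?thesis
    by simp
qed

definition latencies_ok :: "nat \<Rightarrow> (req \<Rightarrow> req option) \<Rightarrow> (req \<Rightarrow> real) \<Rightarrow> bool" where
  "latencies_ok h P A \<longleftrightarrow> (\<forall>r p. P r = Some p \<longrightarrow> A r = snd r + tree_dist h (fst r) (fst p))"

lemma latencies_ok_update:
  "latencies_ok h P A \<Longrightarrow> a = snd r + tree_dist h (fst r) (fst p) \<Longrightarrow>
     latencies_ok h (P(r := Some p)) (A(r := a))"
  unfolding latencies_ok_def by auto

text \<open>A find message that reaches a sink u is queued behind a request issued at u.\<close>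
definition arrow_inv :: "nat \<Rightarrow> state \<Rightarrow> bool" where
  "arrow_inv h s \<longleftrightarrow>
     pointers_ok (lnk s) \<and> (\<forall>m \<in> msgs s. find_msg_ok h (lnk s) m) \<and> inj_on msg_edge (msgs s) \<and>
     (\<forall>u. lnk s u = u \<longrightarrow> fst (lastreq s u) = u) \<and> latencies_ok h (pred s) (arrt s)"

lemma arrow_inv_init: "arrow_inv h (init_state v0)"
proof -
  have "link0 v0 u = u \<Longrightarrow> u = v0" for u
    using link0_towards away_from_adjacent adjacent_irrefl by metis
  then show ?thesis
    using pointers_ok_link0 by (auto simp: arrow_inv_def latencies_ok_def init_state_def)
qed

lemma arrow_inv_issue:
  assumes inv: "arrow_inv h s"
  shows "arrow_inv h (issue_step h r s)"
proof (cases "lnk s (fst r) = fst r")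
  case True
  have step: "issue_step h r s = s\<lparr>pred := (pred s)(r := Some (lastreq s (fst r))),
                                     arrt := (arrt s)(r := snd r), lastreq := (lastreq s)(fst r := r)\<rparr>"
    using True by (simp add: issue_step_def Let_def)
  have "fst (lastreq s (fst r)) = fst r"
    using inv True unfolding arrow_inv_def by simp
  moreover have "latencies_ok h (pred s) (arrt s)"
    using inv unfolding arrow_inv_def by simp
  ultimately have "latencies_ok h ((pred s)(r := Some (lastreq s (fst r)))) ((arrt s)(r := snd r))"
    by (intro latencies_ok_update) (simp_all add: tree_dist_self)
  moreover have "\<forall>u. lnk s u = u \<longrightarrow> fst (((lastreq s)(fst r := r)) u) = u"
    using inv unfolding arrow_inv_def by simp
  ultimately show ?thesis
    using inv unfolding step arrow_inv_def by simp
next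
  case False
  define n where "n = (r, fst r, lnk s (fst r), snd r + elen h (fst r) (lnk s (fst r)))"
  have step: "issue_step h r s = s\<lparr>msgs := insert n (msgs s), lnk := (lnk s)(fst r := fst r),
                                     lastreq := (lastreq s)(fst r := r)\<rparr>"
    using False by (simp add: issue_step_def Let_def n_def)
  have "pointers_ok (lnk s)"
    using inv unfolding arrow_inv_def by simp
  then have "find_msg_ok h ((lnk s)(fst r := fst r)) n"
    unfolding n_def using False by (rule find_msg_ok_issued)
  moreover have "msg_edge n \<notin> msg_edge ` msgs s"
  proof
    assume "msg_edge n \<in> msg_edge ` msgs s"
    then obtain m where "m \<in> msgs s" and "msg_edge m = msg_edge n"
      by blast
    then have "m \<in> msgs s" and "msg_edge m = {fst r, lnk s (fst r)}"
      by (simp_all add: n_def)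
    with inv show False
      using find_msg_ok_edge unfolding arrow_inv_def by blast
  qed
  then have "msg_edge n \<notin> msg_edge ` (msgs s - {n})"
    by blast
  moreover have "\<forall>u. ((lnk s)(fst r := fst r)) u = u \<longrightarrow> fst (((lastreq s)(fst r := r)) u) = u"
    using inv unfolding arrow_inv_def by simp
  ultimately show ?thesis
    using inv pointers_ok_sink find_msg_ok_sink unfolding step arrow_inv_def by simp
qed

lemma arrow_inv_deliver:
  assumes inv: "arrow_inv h s" and m: "m \<in> msgs s"
  shows "arrow_inv h (deliver_step h m s)"
proof -
  obtain r w u a where m_def: "m = (r, w, u, a)" by (cases m)
  from inv have pointers: "pointers_ok (lnk s)" and msgs_ok: "\<forall>m \<in> msgs s. find_msg_ok h (lnk s) m"
    and inj: "inj_on msg_edge (msgs s)" and sinks: "\<forall>u. lnk s u = u \<longrightarrow> fst (lastreq s u) = u"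
    and latencies: "latencies_ok h (pred s) (arrt s)"
    unfolding arrow_inv_def by simp_all
  have ok: "find_msg_ok h (lnk s) (r, w, u, a)"
    using m msgs_ok unfolding m_def by blast
  then have "lnk s w \<noteq> u" and "adjacent u w"
    using away_from_adjacent adjacent_sym by simp_all blast
  then have pointers': "pointers_ok ((lnk s)(u := w))"
    using pointers pointers_ok_redirect by blast
  have msgs_ok': "\<forall>m' \<in> msgs s - {m}. find_msg_ok h ((lnk s)(u := w)) m'"
  proof
    fix m' assume m': "m' \<in> msgs s - {m}"
    then have "msg_edge m' \<noteq> msg_edge m"
      using inj m inj_onD by fastforce
    with m' msgs_ok show "find_msg_ok h ((lnk s)(u := w)) m'"
      using find_msg_ok_redirect by (simp add: m_def)
  qed
  have "w \<noteq> u"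
    using \<open>adjacent u w\<close> adjacent_irrefl by blast
  with sinks have sinks': "\<forall>x. ((lnk s)(u := w)) x = x \<longrightarrow> fst (lastreq s x) = x"
    by simp
  have inj': "inj_on msg_edge (msgs s - {m})"
    using inj inj_on_diff by blast
  show ?thesis
  proof (cases "lnk s u = u")
    case True
    have step: "deliver_step h m s = s\<lparr>msgs := msgs s - {m}, pred := (pred s)(r := Some (lastreq s u)),
                                        arrt := (arrt s)(r := a), lnk := (lnk s)(u := w)\<rparr>"
      using True by (simp add: deliver_step_def m_def)
    have "fst (lastreq s u) = u" and "a = snd r + tree_dist h (fst r) u"
      using sinks ok True by simp_all
    with latencies have "latencies_ok h ((pred s)(r := Some (lastreq s u))) ((arrt s)(r := a))"
      by (intro latencies_ok_update) simp_all
    with pointers' msgs_ok' inj' sinks' show ?thesis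
      unfolding step arrow_inv_def by simp
  next
    case False
    define n where "n = (r, u, lnk s u, a + elen h u (lnk s u))"
    have step: "deliver_step h m s = s\<lparr>msgs := insert n (msgs s - {m}), lnk := (lnk s)(u := w)\<rparr>"
      using False by (simp add: deliver_step_def m_def n_def Let_def)
    have "find_msg_ok h ((lnk s)(u := w)) n"
      unfolding n_def using pointers ok False by (rule find_msg_ok_forwarded)
    moreover have "msg_edge n \<notin> msg_edge ` (msgs s - {m} - {n})"
    proof
      assume "msg_edge n \<in> msg_edge ` (msgs s - {m} - {n})"
      then obtain m' where "m' \<in> msgs s" and "msg_edge m' = msg_edge n"
        by blast
      then have "m' \<in> msgs s" and "msg_edge m' = {u, lnk s u}"
        by (simp_all add: n_def)
      with msgs_ok show False
        using find_msg_ok_edge by blast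
    qed
    ultimately show ?thesis
      using pointers' msgs_ok' inj' sinks' latencies
      unfolding step arrow_inv_def by simp
  qed
qed

lemma arrow_inv_apply_event:
  "arrow_inv h s \<Longrightarrow> enabled s e \<Longrightarrow> arrow_inv h (apply_event h e s)"
  by (cases e) (auto intro: arrow_inv_issue arrow_inv_deliver)

lemma arrow_inv_sync_exec:
  assumes "sync_exec h v0 R es ss"
  shows "arrow_inv h (last ss)"
proof -
  have len: "length ss = Suc (length es)"
    and steps: "\<And>i. i < length es \<Longrightarrow> enabled (ss ! i) (es ! i) \<and>
                                      ss ! Suc i = apply_event h (es ! i) (ss ! i)"
    and init: "ss ! 0 = init_state v0"
    using assms unfolding sync_exec_def by auto
  have "arrow_inv h (ss ! i)" if "i \<le> length es" for i
    using that
  proof (induction i)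
    case 0
    then show ?case using init arrow_inv_init by simp
  next
    case (Suc i)
    then show ?case using steps[of i] arrow_inv_apply_event by simp
  qed
  moreover have "ss \<noteq> []"
    using len by auto
  then have "last ss = ss ! length es"
    using len by (simp add: last_conv_nth)
  ultimately show ?thesis by simp
qed

lemma sync_exec_latency:
  assumes "sync_exec h v0 R es ss" and "pred (last ss) r = Some p"
  shows "arrt (last ss) r - snd r = tree_dist h (fst r) (fst p)"
proof -
  have "arrt (last ss) r = snd r + tree_dist h (fst r) (fst p)"
    using arrow_inv_sync_exec[OF assms(1)] assms(2) unfolding arrow_inv_def latencies_ok_def by blast
  then show ?thesis by simp
qed

section \<open>Counting blocks\<close>

definition constant_run :: "(nat \<Rightarrow> 'b) \<Rightarrow> nat \<Rightarrow> nat \<Rightarrow> nat \<Rightarrow> bool" where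
  "constant_run f n a b \<longleftrightarrow> a \<le> b \<and> b < n \<and> (\<forall>i \<in> {a..b}. f i = f a)"

definition maximal_runs :: "(nat \<Rightarrow> 'b) \<Rightarrow> nat \<Rightarrow> nat set set" where
  "maximal_runs f n = {{a..b} | a b. constant_run f n a b \<and>
     (\<forall>a' b'. constant_run f n a' b' \<and> {a..b} \<subseteq> {a'..b'} \<longrightarrow> {a'..b'} = {a..b})}"

definition run_starts :: "(nat \<Rightarrow> 'b) \<Rightarrow> nat \<Rightarrow> nat set" where
  "run_starts f n = {a. a < n \<and> (a = 0 \<or> f (a - 1) \<noteq> f a)}"

lemma constant_runD:
  assumes "constant_run f n a b"
  shows "a \<le> b" and "b < n" and "\<And>i. i \<in> {a..b} \<Longrightarrow> f i = f a"
  using assms unfolding constant_run_def by blast+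

lemma Min_atLeastAtMost: "(a::nat) \<le> b \<Longrightarrow> Min {a..b} = a"
  by (rule Min_eqI) auto

lemma constant_run_extend_left:
  assumes "constant_run f n a b" and "0 < a" and "f (a - 1) = f a"
  shows "constant_run f n (a - 1) b"
proof -
  have "f i = f (a - 1)" if "i \<in> {a - 1..b}" for i
  proof (cases "i = a - 1")
    case False
    with that assms(2) have "i \<in> {a..b}" by auto
    then have "f i = f a" by (rule constant_runD(3)[OF assms(1)])
    with assms(3) show ?thesis by simp
  qed simp
  moreover have "a - 1 \<le> b" and "b < n"
    using constant_runD(1,2)[OF assms(1)] by simp_all
  ultimately show ?thesis
    unfolding constant_run_def by blast
qed

lemma Min_maximal_run:
  assumes "X \<in> maximal_runs f n"
  shows "Min X \<in> run_starts f n"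
proof -
  obtain a b where X: "X = {a..b}" and run: "constant_run f n a b"
    and maximal: "\<And>a' b'. constant_run f n a' b' \<Longrightarrow> {a..b} \<subseteq> {a'..b'} \<Longrightarrow> {a'..b'} = {a..b}"
    using assms unfolding maximal_runs_def by blast
  have "a = 0 \<or> f (a - 1) \<noteq> f a"
  proof (rule ccontr)
    assume "\<not> (a = 0 \<or> f (a - 1) \<noteq> f a)"
    then have "constant_run f n (a - 1) b"
      by (intro constant_run_extend_left[OF run]) simp_all
    then have "{a - 1..b} = {a..b}"
      by (rule maximal) auto
    moreover have "a - 1 \<in> {a - 1..b}" and "a - 1 \<notin> {a..b}"
      using constant_runD(1)[OF run] \<open>\<not> (a = 0 \<or> f (a - 1) \<noteq> f a)\<close> by auto
    ultimately show False
      by blast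
  qed
  moreover have "Min X = a" and "a < n"
    using X constant_runD(1,2)[OF run] by (simp_all add: Min_atLeastAtMost)
  ultimately show ?thesis
    unfolding run_starts_def by simp
qed

lemma inj_on_Min_maximal_runs: "inj_on Min (maximal_runs f n)"
proof (rule inj_onI)
  fix X Y
  assume "X \<in> maximal_runs f n" and "Y \<in> maximal_runs f n" and "Min X = Min Y"
  then obtain a b c d where X: "X = {a..b}" and Y: "Y = {c..d}"
    and run: "constant_run f n a b" and run': "constant_run f n c d"
    and maxX: "\<forall>a' b'. constant_run f n a' b' \<and> {a..b} \<subseteq> {a'..b'} \<longrightarrow> {a'..b'} = {a..b}"
    and maxY: "\<forall>a' b'. constant_run f n a' b' \<and> {c..d} \<subseteq> {a'..b'} \<longrightarrow> {a'..b'} = {c..d}"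
    unfolding maximal_runs_def by blast
  have "a \<le> b" and "c \<le> d"
    using run run' by (simp_all add: constant_runD(1))
  with X Y \<open>Min X = Min Y\<close> have "a = c"
    by (simp add: Min_atLeastAtMost)
  show "X = Y"
  proof (cases "b \<le> d")
    case True
    with \<open>a = c\<close> have "{a..b} \<subseteq> {c..d}" by simp
    with maxX run' X Y show ?thesis by blast
  next
    case False
    with \<open>a = c\<close> have "{c..d} \<subseteq> {a..b}" by simp
    with maxY run X Y show ?thesis by blast
  qed
qed

lemma run_start_Min_maximal_run:
  assumes "a \<in> run_starts f n"
  shows "a \<in> Min ` maximal_runs f n"
proof -
  define b where "b = Max {b. constant_run f n a b}"
  have "finite {b. constant_run f n a b}"
    unfolding constant_run_def by (rule finite_subset[of _ "{..<n}"]) auto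
  moreover have "constant_run f n a a"
    using assms unfolding run_starts_def constant_run_def by simp
  ultimately have run: "constant_run f n a b" and longest: "\<And>b'. constant_run f n a b' \<Longrightarrow> b' \<le> b"
    unfolding b_def using Max_in Max_ge by blast+
  then have "a \<le> b"
    using constant_runD(1) by blast
  have "{a'..b'} = {a..b}" if run': "constant_run f n a' b'" and sub: "{a..b} \<subseteq> {a'..b'}" for a' b'
  proof -
    from sub \<open>a \<le> b\<close> have "a' \<le> a" and "b \<le> b'"
      by simp_all
    have "a' = a"
    proof (rule ccontr)
      assume "a' \<noteq> a"
      with \<open>a' \<le> a\<close> assms have "f (a - 1) \<noteq> f a"
        unfolding run_starts_def by simp
      moreover have "a - 1 \<in> {a'..b'}" and "a \<in> {a'..b'}"
        using \<open>a' \<le> a\<close> \<open>a' \<noteq> a\<close> \<open>a \<le> b\<close> \<open>b \<le> b'\<close> by auto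
      ultimately show False
        using constant_runD(3)[OF run'] by metis
    qed
    with run' longest \<open>b \<le> b'\<close> show ?thesis
      by (simp add: le_antisym)
  qed
  with run have "{a..b} \<in> maximal_runs f n"
    unfolding maximal_runs_def by blast
  moreover have "Min {a..b} = a"
    using \<open>a \<le> b\<close> by (rule Min_atLeastAtMost)
  ultimately show ?thesis
    by (metis image_eqI)
qed

lemma card_maximal_runs:
  assumes "0 < n"
  shows "card (maximal_runs f n) = Suc (card {i. Suc i < n \<and> f i \<noteq> f (Suc i)})"
proof -
  have "bij_betw Min (maximal_runs f n) (run_starts f n)"
    using inj_on_Min_maximal_runs Min_maximal_run run_start_Min_maximal_run
    unfolding bij_betw_def by blast
  moreover have "run_starts f n = insert 0 (Suc ` {i. Suc i < n \<and> f i \<noteq> f (Suc i)})"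
  proof (intro set_eqI iffI)
    fix a assume "a \<in> run_starts f n"
    then show "a \<in> insert 0 (Suc ` {i. Suc i < n \<and> f i \<noteq> f (Suc i)})"
      unfolding run_starts_def by (cases a) auto
  next
    fix a assume "a \<in> insert 0 (Suc ` {i. Suc i < n \<and> f i \<noteq> f (Suc i)})"
    then show "a \<in> run_starts f n"
      using assms unfolding run_starts_def by auto
  qed
  moreover have "finite {i. Suc i < n \<and> f i \<noteq> f (Suc i)}"
    by (rule finite_subset[of _ "{..<n}"]) auto
  ultimately show ?thesis
    by (simp add: bij_betw_same_card card_image)
qed

lemma same_subtree_run_eq_constant_run:
  assumes "\<And>i. i < length rs \<Longrightarrow> length (fst (rs ! i)) = h"
  shows "same_subtree_run h l rs = constant_run (\<lambda>i. take (h - l) (fst (rs ! i))) (length rs)"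
proof (intro ext iffI)
  fix a b
  assume "same_subtree_run h l rs a b"
  then obtain p where "a \<le> b" and "b < length rs" and p: "\<forall>i \<in> {a..b}. take (h - l) (fst (rs ! i)) = p"
    unfolding same_subtree_run_def by blast
  then show "constant_run (\<lambda>i. take (h - l) (fst (rs ! i))) (length rs) a b"
    unfolding constant_run_def by simp
next
  fix a b
  assume run: "constant_run (\<lambda>i. take (h - l) (fst (rs ! i))) (length rs) a b"
  then have "a \<le> b" and "b < length rs"
    by (simp_all add: constant_runD(1,2))
  then have "length (take (h - l) (fst (rs ! a))) = h - l"
    using assms by simp
  with \<open>a \<le> b\<close> \<open>b < length rs\<close> constant_runD(3)[OF run] show "same_subtree_run h l rs a b"
    unfolding same_subtree_run_def by blast
qed

lemma nblocks_eq_Suc_card: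
  assumes "\<And>i. i < length rs \<Longrightarrow> length (fst (rs ! i)) = h" and "rs \<noteq> []"
  shows "nblocks h l rs =
    Suc (card {i. Suc i < length rs \<and> take (h - l) (fst (rs ! i)) \<noteq> take (h - l) (fst (rs ! Suc i))})"
proof -
  have "blocks h l rs = maximal_runs (\<lambda>i. take (h - l) (fst (rs ! i))) (length rs)"
    by (simp only: blocks_def maximal_runs_def same_subtree_run_eq_constant_run[OF assms(1)])
  with assms(2) show ?thesis
    unfolding nblocks_def by (simp add: card_maximal_runs)
qed

lemma arrow_order_nth_length:
  assumes "arrow_order s r0 R rs" and "\<forall>r \<in> R. length (fst r) = h" and "i < length rs"
  shows "length (fst (rs ! i)) = h"
  using assms nth_mem unfolding arrow_order_def by blast

lemma total_cost_arrow_order: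
  assumes "arrow_order s r0 R rs"
  shows "total_cost s r0 R = (\<Sum>i < length rs - 1. arrt s (rs ! Suc i) - snd (rs ! Suc i))"
proof -
  from assms have "rs = r0 # tl rs" and "distinct rs" and "set rs = R"
    unfolding arrow_order_def by (auto simp: hd_conv_nth[symmetric])
  then have "R - {r0} = set (tl rs)" and "distinct (tl rs)"
    by (metis Diff_insert_absorb distinct.simps(2) list.simps(15))+
  then have "total_cost s r0 R = (\<Sum>i < length (tl rs). arrt s (tl rs ! i) - snd (tl rs ! i))"
    unfolding total_cost_def
    by (simp add: sum.distinct_set_conv_list sum_list_sum_nth atLeast0LessThan)
  then show ?thesis
    by (simp add: nth_tl)
qed

lemma sum_tree_dist_leaves:
  assumes "\<And>i. i < Suc k \<Longrightarrow> length (f i) = h"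
  shows "(\<Sum>i<k. tree_dist h (f (Suc i)) (f i)) =
    (\<Sum>l<h. real (card {i. i < k \<and> take (h - l) (f i) \<noteq> take (h - l) (f (Suc i))}) * 2 ^ (l + 1))"
proof -
  have "(\<Sum>i<k. tree_dist h (f (Suc i)) (f i)) =
      (\<Sum>i<k. \<Sum>l<h. if take (h - l) (f i) \<noteq> take (h - l) (f (Suc i)) then 2 ^ (l + 1) else 0)"
  proof (rule sum.cong)
    fix i assume "i \<in> {..<k}"
    then show "tree_dist h (f (Suc i)) (f i) =
        (\<Sum>l<h. if take (h - l) (f i) \<noteq> take (h - l) (f (Suc i)) then 2 ^ (l + 1) else 0)"
      using assms by (simp add: tree_dist_leaves eq_commute)
  qed simp
  also have "\<dots> = (\<Sum>l<h. \<Sum>i<k. if take (h - l) (f i) \<noteq> take (h - l) (f (Suc i)) then 2 ^ (l + 1) else 0)"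
    by (rule sum.swap)
  also have "\<dots> = (\<Sum>l<h. real (card {i. i < k \<and> take (h - l) (f i) \<noteq> take (h - l) (f (Suc i))}) * 2 ^ (l + 1))"
  proof (rule sum.cong)
    fix l
    have "{i \<in> {..<k}. take (h - l) (f i) \<noteq> take (h - l) (f (Suc i))} =
        {i. i < k \<and> take (h - l) (f i) \<noteq> take (h - l) (f (Suc i))}"
      by auto
    then show "(\<Sum>i<k. if take (h - l) (f i) \<noteq> take (h - l) (f (Suc i)) then 2 ^ (l + 1) else 0) =
        real (card {i. i < k \<and> take (h - l) (f i) \<noteq> take (h - l) (f (Suc i))}) * (2::real) ^ (l + 1)"
      by (simp flip: sum.inter_filter)
  qed simp
  finally show ?thesis .
qed

lemma sum_power2_by_parts:
  fixes c :: "nat \<Rightarrow> real"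
  shows "(\<Sum>l<h. c l * 2 ^ (l + 1)) = (\<Sum>l<h. (c l - c (Suc l)) * delta (Suc l)) + c h * delta h"
  by (induction h) (simp_all add: delta_def algebra_simps)

theorem lemma6:
  fixes T :: "node set" and h :: nat and v0 :: node and R :: "req set"
    and es :: "event list" and ss :: "state list" and rs :: "req list"
  assumes "hst T h"
    and "v0 \<in> leaves T h"
    and "finite R"
    and "(v0, 0) \<in> R"
    and "\<forall>(v, t) \<in> R. v \<in> leaves T h \<and> t \<ge> 0"
    and "sync_exec h v0 R es ss"
    and "arrow_order (last ss) (v0, 0) R rs"
  shows "total_cost (last ss) (v0, 0) R =
         (\<Sum>l < h. (real (nblocks h l rs) - real (nblocks h (Suc l) rs)) * delta (Suc l))"
proof -
  define c where "c l = card {i. Suc i < length rs \<and>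
    take (h - l) (fst (rs ! i)) \<noteq> take (h - l) (fst (rs ! Suc i))}" for l
  have "rs \<noteq> []" and pred: "\<And>i. Suc i < length rs \<Longrightarrow> pred (last ss) (rs ! Suc i) = Some (rs ! i)"
    using assms(7) unfolding arrow_order_def by auto
  have "\<forall>r \<in> R. length (fst r) = h"
    using assms(5) unfolding leaves_def by auto
  then have leaf: "\<And>i. i < length rs \<Longrightarrow> length (fst (rs ! i)) = h"
    using arrow_order_nth_length[OF assms(7)] by blast
  have "total_cost (last ss) (v0, 0) R = (\<Sum>i < length rs - 1. tree_dist h (fst (rs ! Suc i)) (fst (rs ! i)))"
    using total_cost_arrow_order[OF assms(7)] sync_exec_latency[OF assms(6) pred] by simp
  also have "\<dots> = (\<Sum>l<h. real (c l) * 2 ^ (l + 1))"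
    using sum_tree_dist_leaves[of "length rs - 1" "\<lambda>i. fst (rs ! i)" h] leaf \<open>rs \<noteq> []\<close>
    unfolding c_def by (simp add: less_diff_conv)
  also have "\<dots> = (\<Sum>l<h. (real (c l) - real (c (Suc l))) * delta (Suc l))"
    using sum_power2_by_parts[of "\<lambda>l. real (c l)" h] by (simp add: c_def)
  also have "\<dots> = (\<Sum>l < h. (real (nblocks h l rs) - real (nblocks h (Suc l) rs)) * delta (Suc l))"
    using nblocks_eq_Suc_card[OF leaf \<open>rs \<noteq> []\<close>] unfolding c_def by simp
  finally show ?thesis .
qed

end
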